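(* Let $M$ be a metric space with metric $d$, let $s\in M$ and let $r>1$. For $n\in\mathbb{Z}$ let $M_n=\{s\}\cup\{p\in M : d(s,p)\in[r^n,r^{n+1})\}$ (with the restricted metric). If for each $n\in\mathbb{Z}$ the infinite server problem on $(M_n,s)$ admits a strictly $\rho$-competitive online algorithm, then the infinite server problem on $(M,s)$ admits a strictly $\frac{4r-1}{r-1}\rho$-competitive online algorithm.
   Context: Infinite server problem on $(M,s)$: $M$ is a metric space and $s\in M$ the source; an unbounded number of servers initially reside at $s$. A finite sequence of requests (points of $M$) is revealed one by one; each must be served immediately, without knowledge of future requests, by moving some server to it; the cost is the total distance traveled. An online algorithm $ALG$ is strictly $\rho$-competitive if $ALG(\sigma)\le\rho\,OPT(\sigma)$ for every request sequence $\sigma$, where $OPT(\sigma)$ is the optimal offline cost. *)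

theory Defs
  imports "HOL-Analysis.Analysis"
begin

text \<open>Servers are indexed by nat; initially every server is at s.  A step is a pair
  (request p, index k of the server moved to p); its cost is the distance travelled.\<close>

fun serve_cost :: "(nat \<Rightarrow> 'a::metric_space) \<Rightarrow> ('a \<times> nat) list \<Rightarrow> real" where
  "serve_cost c [] = 0"
| "serve_cost c ((p, k) # rest) = dist (c k) p + serve_cost (c(k := p)) rest"

definition schedule_cost :: "'a::metric_space \<Rightarrow> ('a \<times> nat) list \<Rightarrow> real" where
  "schedule_cost s steps = serve_cost (\<lambda>_. s) steps"

definition OPT :: "'a::metric_space \<Rightarrow> 'a list \<Rightarrow> real" where
  "OPT s \<sigma> = Inf {schedule_cost s (zip \<sigma> ks) | ks. length ks = length \<sigma>}"

text \<open>A (deterministic) online algorithm chooses, given the requests revealed so far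
  (the last one being the current request), which server serves the current request.\<close>
type_synonym 'a online_alg = "'a list \<Rightarrow> nat"

definition alg_choices :: "'a online_alg \<Rightarrow> 'a list \<Rightarrow> nat list" where
  "alg_choices A \<sigma> = map (\<lambda>i. A (take (Suc i) \<sigma>)) [0..<length \<sigma>]"

definition ALG_cost :: "'a::metric_space \<Rightarrow> 'a online_alg \<Rightarrow> 'a list \<Rightarrow> real" where
  "ALG_cost s A \<sigma> = schedule_cost s (zip \<sigma> (alg_choices A \<sigma>))"

definition strictly_competitive ::
  "'a::metric_space set \<Rightarrow> 'a \<Rightarrow> real \<Rightarrow> 'a online_alg \<Rightarrow> bool" where
  "strictly_competitive M s \<rho> A \<longleftrightarrow>
     (\<forall>\<sigma>. set \<sigma> \<subseteq> M \<longrightarrow> ALG_cost s A \<sigma> \<le> \<rho> * OPT s \<sigma>)"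

definition shell :: "'a::metric_space set \<Rightarrow> 'a \<Rightarrow> real \<Rightarrow> int \<Rightarrow> 'a set" where
  "shell M s r n = {s} \<union> {p \<in> M. r powi n \<le> dist s p \<and> dist s p < r powi (n + 1)}"

end

theory Submission
  imports Defs
begin

(*
  Requests at s are free, and every other request p belongs to exactly one shell, the one indexed
  by \<lfloor>log r d(s, p)\<rfloor>. The online algorithm feeds the subsequence \<sigma>\<^sub>n of requests in shell n to the
  given algorithm for that shell, each with its own pool of servers, so its cost is at most
  \<rho> \<Sum>\<^sub>n OPT(\<sigma>\<^sub>n). It remains to show \<Sum>\<^sub>n OPT(\<sigma>\<^sub>n) \<le> 3r/(r - 1) OPT(\<sigma>), which is slightly
  better than needed, since 3r \<le> 4r - 1.

  For this, an offline schedule for \<sigma> is simulated in every shell simultaneously: each of its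
  servers has a copy in each shell, and when the server moves to a request p of shell m, its shell-m
  copy either follows it or is replaced by a fresh server coming from s. A potential of the form
  \<Sum> min(d(copy, server), w\<^sub>n(d(s, server))) pays for this, where the weight w\<^sub>n equals the identity on
  shell n, is supported on three consecutive shells and is r/(r - 1)-Lipschitz; hence a move of
  length \<delta> raises the potential by at most 3r/(r - 1) \<delta>, minus the cost of the simulated move.
*)

lemma serve_cost_nonneg: "0 \<le> serve_cost c steps"
  by (induction steps arbitrary: c) auto

definition opt_from :: "(nat \<Rightarrow> 'a::metric_space) \<Rightarrow> 'a list \<Rightarrow> real" where
  "opt_from c \<tau> = Inf {serve_cost c (zip \<tau> ks) | ks. length ks = length \<tau>}"

lemma OPT_eq_opt_from: "OPT s \<sigma> = opt_from (\<lambda>_. s) \<sigma>"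
  by (simp add: OPT_def opt_from_def schedule_cost_def)

lemma opt_from_le: "length ks = length \<tau> \<Longrightarrow> opt_from c \<tau> \<le> serve_cost c (zip \<tau> ks)"
  unfolding opt_from_def
  by (rule cInf_lower) (auto intro: bdd_belowI[of _ 0] simp: serve_cost_nonneg)

lemma opt_from_greatest:
  "(\<And>ks. length ks = length \<tau> \<Longrightarrow> b \<le> serve_cost c (zip \<tau> ks)) \<Longrightarrow> b \<le> opt_from c \<tau>"
  unfolding opt_from_def
  by (rule cInf_greatest) (auto intro: exI[of _ "replicate (length \<tau>) 0"])

lemma opt_from_nonneg: "0 \<le> opt_from c \<tau>"
  by (rule opt_from_greatest) (simp add: serve_cost_nonneg)

lemma opt_from_Nil: "opt_from c [] = 0"
  by (simp add: opt_from_def)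

lemma opt_from_Cons_le: "opt_from c (p # \<tau>) \<le> dist (c k) p + opt_from (c(k := p)) \<tau>"
proof -
  have "opt_from c (p # \<tau>) - dist (c k) p \<le> opt_from (c(k := p)) \<tau>"
  proof (rule opt_from_greatest)
    fix ks :: "nat list" assume "length ks = length \<tau>"
    then have "opt_from c (p # \<tau>) \<le> serve_cost c (zip (p # \<tau>) (k # ks))"
      by (intro opt_from_le) simp
    then show "opt_from c (p # \<tau>) - dist (c k) p \<le> serve_cost (c(k := p)) (zip \<tau> ks)"
      by simp
  qed
  then show ?thesis by simp
qed

definition final_config :: "(nat \<Rightarrow> 'a) \<Rightarrow> ('a \<times> nat) list \<Rightarrow> nat \<Rightarrow> 'a" where
  "final_config c steps = foldl (\<lambda>c (p, k). c(k := p)) c steps"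

lemma serve_cost_snoc:
  "serve_cost c (steps @ [(p, k)]) = serve_cost c steps + dist (final_config c steps k) p"
  by (induction steps arbitrary: c) (auto simp: final_config_def)

lemma final_config_snoc: "final_config c (steps @ [(p, k)]) = (final_config c steps)(k := p)"
  by (simp add: final_config_def)

lemma length_alg_choices [simp]: "length (alg_choices A \<sigma>) = length \<sigma>"
  by (simp add: alg_choices_def)

lemma alg_choices_snoc: "alg_choices A (\<sigma> @ [p]) = alg_choices A \<sigma> @ [A (\<sigma> @ [p])]"
proof -
  have "map (\<lambda>i. A (take (Suc i) (\<sigma> @ [p]))) [0..<length \<sigma>] = alg_choices A \<sigma>"
    by (auto simp: alg_choices_def)
  then show ?thesis by (simp add: alg_choices_def)
qed

definition alg_config :: "'a::metric_space \<Rightarrow> 'a online_alg \<Rightarrow> 'a list \<Rightarrow> nat \<Rightarrow> 'a" where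
  "alg_config s A \<sigma> = final_config (\<lambda>_. s) (zip \<sigma> (alg_choices A \<sigma>))"

lemma alg_config_Nil: "alg_config s A [] = (\<lambda>_. s)"
  by (simp add: alg_config_def alg_choices_def final_config_def)

lemma alg_config_snoc: "alg_config s A (\<sigma> @ [p]) = (alg_config s A \<sigma>)(A (\<sigma> @ [p]) := p)"
  by (simp add: alg_config_def alg_choices_snoc final_config_snoc)

lemma ALG_cost_Nil: "ALG_cost s A [] = 0"
  by (simp add: ALG_cost_def schedule_cost_def alg_choices_def)

lemma ALG_cost_snoc:
  "ALG_cost s A (\<sigma> @ [p]) = ALG_cost s A \<sigma> + dist (alg_config s A \<sigma> (A (\<sigma> @ [p]))) p"
  by (simp add: ALG_cost_def schedule_cost_def alg_choices_snoc serve_cost_snoc alg_config_def)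

lemma OPT_le_ALG_cost: "OPT s \<sigma> \<le> ALG_cost s A \<sigma>"
  unfolding OPT_eq_opt_from ALG_cost_def schedule_cost_def by (rule opt_from_le) simp

lemma abs_max0_min3_diff_le:
  fixes u1 u2 u3 v1 v2 v3 L :: real
  assumes "\<bar>u1 - v1\<bar> \<le> L" "\<bar>u2 - v2\<bar> \<le> L" "\<bar>u3 - v3\<bar> \<le> L"
  shows "\<bar>max 0 (min u1 (min u2 u3)) - max 0 (min v1 (min v2 v3))\<bar> \<le> L"
  using assms by (auto simp: min_def max_def abs_if split: if_splits)

section \<open>Shells\<close>

locale shell_decomposition =
  fixes s :: "'a::metric_space" and r :: real
  assumes r_gt_1: "1 < r"
begin

definition shell_index :: "'a \<Rightarrow> int" where
  "shell_index p = \<lfloor>log r (dist s p)\<rfloor>"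

lemma shell_index_bounds:
  assumes "p \<noteq> s"
  shows "r powi shell_index p \<le> dist s p" and "dist s p < r powi (shell_index p + 1)"
proof -
  have d: "0 < dist s p" using assms by simp
  have "r powr of_int (shell_index p) \<le> dist s p"
    unfolding shell_index_def le_log_iff[OF r_gt_1 d, symmetric] by (rule of_int_floor_le)
  then show "r powi shell_index p \<le> dist s p"
    using r_gt_1 by (simp add: powr_real_of_int')
  have "dist s p < r powr of_int (shell_index p + 1)"
    unfolding shell_index_def log_less_iff[OF r_gt_1 d, symmetric] by linarith
  then show "dist s p < r powi (shell_index p + 1)"
    using r_gt_1 powr_real_of_int'[of r "shell_index p + 1"] by simp
qed

definition shell_slope :: real where
  "shell_slope = r / (r - 1)"

lemma shell_slope_ge_1: "1 \<le> shell_slope"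
  using r_gt_1 by (simp add: shell_slope_def field_simps)

lemma le_shell_slope_mult: "0 \<le> x \<Longrightarrow> x \<le> shell_slope * x"
  using shell_slope_ge_1 by (simp add: mult_le_cancel_right1)

(* Equal to x on [r^n, r^(n+1)], zero outside (r^(n-1), r^(n+2)) and (r/(r-1))-Lipschitz;
   so a request moves the potential of at most three shells. *)
definition shell_weight :: "int \<Rightarrow> real \<Rightarrow> real" where
  "shell_weight n x = max 0 (min (shell_slope * (x - r powi (n - 1)))
     (min x (r powi (n + 1) - shell_slope * (x - r powi (n + 1)))))"

lemma shell_weight_nonneg: "0 \<le> shell_weight n x"
  by (simp add: shell_weight_def)

lemma shell_weight_0: "shell_weight n 0 = 0"
  using shell_slope_ge_1 r_gt_1 by (simp add: shell_weight_def mult_pos_pos)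

lemma shell_weight_lipschitz: "\<bar>shell_weight n x - shell_weight n y\<bar> \<le> shell_slope * \<bar>x - y\<bar>"
  unfolding shell_weight_def using shell_slope_ge_1
  by (intro abs_max0_min3_diff_le)
     (auto simp: abs_mult le_shell_slope_mult abs_minus_commute simp flip: right_diff_distrib)

lemma shell_weight_on_shell:
  assumes "r powi n \<le> x" "x \<le> r powi (n + 1)"
  shows "shell_weight n x = x"
proof -
  have "r powi n = r * r powi (n - 1)"
    by (metis diff_add_cancel power_int_add_1' r_gt_1 not_one_less_zero mult.commute)
  then have "x \<le> shell_slope * (x - r powi (n - 1))"
    using assms r_gt_1 by (simp add: shell_slope_def field_simps)
  moreover have "x * (1 + shell_slope) \<le> r powi (n + 1) * (1 + shell_slope)"
    using assms shell_slope_ge_1 by (intro mult_right_mono) auto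
  then have "x \<le> r powi (n + 1) - shell_slope * (x - r powi (n + 1))"
    by (simp add: algebra_simps)
  moreover have "0 \<le> x"
    using assms(1) r_gt_1 by (smt (verit) zero_less_power_int)
  ultimately show ?thesis by (simp add: shell_weight_def)
qed

lemma shell_weight_vanishes:
  assumes "r powi m \<le> x" "x < r powi (m + 1)" "n \<notin> {m - 1, m, m + 1}"
  shows "shell_weight n x = 0"
proof (cases "m + 2 \<le> n")
  case True
  then have "r powi (m + 1) \<le> r powi (n - 1)"
    using r_gt_1 by (intro power_int_increasing) auto
  then have "shell_slope * (x - r powi (n - 1)) \<le> 0"
    using assms shell_slope_ge_1 by (simp add: mult_nonneg_nonpos)
  then show ?thesis unfolding shell_weight_def by linarith
next
  case False
  then have "n + 1 \<le> m - 1" using assms(3) by auto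
  then have "r powi (n + 1) \<le> r powi (m - 1)"
    using r_gt_1 by (intro power_int_increasing) auto
  have "(1 + shell_slope) * r powi (n + 1) \<le> shell_slope * r * r powi (m - 1)"
  proof -
    have "shell_slope * (r - 1) = r"
      using r_gt_1 by (simp add: shell_slope_def)
    then have "1 + shell_slope \<le> shell_slope * r"
      using r_gt_1 by (simp add: algebra_simps)
    then show ?thesis using \<open>r powi (n + 1) \<le> r powi (m - 1)\<close> r_gt_1 shell_slope_ge_1
      by (intro mult_mono) auto
  qed
  also have "shell_slope * r * r powi (m - 1) = shell_slope * r powi m"
    by (metis diff_add_cancel power_int_add_1' r_gt_1 not_one_less_zero mult.assoc mult.commute)
  also have "\<dots> \<le> shell_slope * x"
    using assms(1) shell_slope_ge_1 by (intro mult_left_mono) auto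
  finally have "r powi (n + 1) - shell_slope * (x - r powi (n + 1)) \<le> 0"
    by (simp add: algebra_simps)
  then show ?thesis unfolding shell_weight_def by linarith
qed

(* x is the position of a server of the simulated offline schedule, q that of its copy in shell n. *)
definition copy_potential :: "int \<Rightarrow> 'a \<Rightarrow> 'a \<Rightarrow> real" where
  "copy_potential n q x = min (dist q x) (shell_weight n (dist s x))"

lemma copy_potential_nonneg: "0 \<le> copy_potential n q x"
  by (simp add: copy_potential_def shell_weight_nonneg)

lemma copy_potential_source: "copy_potential n q s = 0"
  by (simp add: copy_potential_def shell_weight_0)

lemma copy_potential_self: "copy_potential n x x = 0"
  by (simp add: copy_potential_def shell_weight_nonneg)

lemma copy_potential_lipschitz: "copy_potential n q y \<le> copy_potential n q x + shell_slope * dist x y"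
proof -
  have dist_diff: "\<bar>dist a y - dist a x\<bar> \<le> dist x y" for a
    by (metis abs_dist_diff_le dist_commute)
  have "\<bar>dist q y - dist q x\<bar> \<le> shell_slope * dist x y"
    using dist_diff[of q] le_shell_slope_mult[of "dist x y"] by simp
  moreover have "shell_slope * \<bar>dist s y - dist s x\<bar> \<le> shell_slope * dist x y"
    using dist_diff[of s] shell_slope_ge_1 by (intro mult_left_mono) auto
  then have "\<bar>shell_weight n (dist s y) - shell_weight n (dist s x)\<bar> \<le> shell_slope * dist x y"
    using shell_weight_lipschitz[of n "dist s y" "dist s x"] by linarith
  ultimately show ?thesis
    unfolding copy_potential_def by (auto simp: min_def abs_if split: if_splits)
qed

lemma copy_potential_vanishes:
  assumes "x \<noteq> s" "n \<notin> {shell_index x - 1, shell_index x, shell_index x + 1}"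
  shows "copy_potential n q x = 0"
  using shell_weight_vanishes[OF shell_index_bounds[OF assms(1)] assms(2)]
  by (simp add: copy_potential_def)

definition shell_requests :: "int \<Rightarrow> 'a list \<Rightarrow> 'a list" where
  "shell_requests n \<sigma> = filter (\<lambda>p. p \<noteq> s \<and> shell_index p = n) \<sigma>"

lemma set_shell_requests_subset_shell:
  "set \<sigma> \<subseteq> M \<Longrightarrow> set (shell_requests n \<sigma>) \<subseteq> shell M s r n"
  using shell_index_bounds by (auto simp: shell_requests_def shell_def)

lemma shell_requests_Cons:
  "shell_requests n (p # \<sigma>) = (if p \<noteq> s \<and> shell_index p = n then p # shell_requests n \<sigma> else shell_requests n \<sigma>)"
  by (simp add: shell_requests_def)

lemma shell_requests_snoc:
  "shell_requests n (\<sigma> @ [p]) = shell_requests n \<sigma> @ (if p \<noteq> s \<and> shell_index p = n then [p] else [])"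
  by (simp add: shell_requests_def)

section \<open>Simulating an offline schedule shell by shell\<close>

(* In the simulated schedule for shell n, server k of the offline schedule owns the servers
   to_nat (k, e); the one with e = E n k is its current copy, those with larger e are still unused. *)
definition current_copy :: "(int \<Rightarrow> nat \<Rightarrow> 'a) \<Rightarrow> (int \<Rightarrow> nat \<Rightarrow> nat) \<Rightarrow> int \<Rightarrow> nat \<Rightarrow> 'a" where
  "current_copy C E n k = C n (to_nat (k, E n k))"

definition fresh_copies :: "(int \<Rightarrow> nat \<Rightarrow> 'a) \<Rightarrow> (int \<Rightarrow> nat \<Rightarrow> nat) \<Rightarrow> bool" where
  "fresh_copies C E \<longleftrightarrow> (\<forall>n k e. E n k < e \<longrightarrow> C n (to_nat (k, e)) = s)"

lemma shell_step:
  assumes fresh: "fresh_copies C E" and "p \<noteq> s" and m: "m = shell_index p"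
  obtains C' E' cost where "fresh_copies C' E'"
    and "\<And>n. n \<noteq> m \<Longrightarrow> C' n = C n"
    and "\<And>\<tau>. opt_from (C m) (p # \<tau>) \<le> cost + opt_from (C' m) \<tau>"
    and "current_copy C' E' m k = p"
    and "\<And>n k'. (n, k') \<noteq> (m, k) \<Longrightarrow> current_copy C' E' n k' = current_copy C E n k'"
    and "cost - copy_potential m (current_copy C E m k) x \<le> shell_slope * dist x p"
proof (cases "dist (current_copy C E m k) x \<le> shell_weight m (dist s x)")
  case True
  define q where "q = current_copy C E m k"
  define C' where "C' = C(m := (C m)(to_nat (k, E m k) := p))"
  have "dist q p - copy_potential m q x \<le> shell_slope * dist x p"
    using True dist_triangle[of q p x] le_shell_slope_mult[of "dist x p"]
    by (simp add: copy_potential_def q_def)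
  moreover have "opt_from (C m) (p # \<tau>) \<le> dist q p + opt_from (C' m) \<tau>" for \<tau>
    using opt_from_Cons_le[of "C m" p \<tau> "to_nat (k, E m k)"]
    by (simp add: C'_def q_def current_copy_def)
  moreover have "fresh_copies C' E"
    using fresh by (auto simp: fresh_copies_def C'_def)
  ultimately show ?thesis
    by (intro that[of C' E "dist q p"]) (auto simp: C'_def q_def current_copy_def)
next
  case False
  define i where "i = to_nat (k, Suc (E m k))"
  define C' where "C' = C(m := (C m)(i := p))"
  define E' where "E' = E(m := (E m)(k := Suc (E m k)))"
  have "C m i = s"
    using fresh by (simp add: fresh_copies_def i_def)
  then have "opt_from (C m) (p # \<tau>) \<le> dist s p + opt_from (C' m) \<tau>" for \<tau>
    using opt_from_Cons_le[of "C m" p \<tau> i] by (simp add: C'_def)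
  moreover have "dist s p - copy_potential m (current_copy C E m k) x \<le> shell_slope * dist x p"
  proof -
    have "shell_weight m (dist s p) = dist s p"
      using shell_index_bounds[OF \<open>p \<noteq> s\<close>] m by (intro shell_weight_on_shell) auto
    moreover have "shell_slope * \<bar>dist s p - dist s x\<bar> \<le> shell_slope * dist x p"
      using shell_slope_ge_1 by (intro mult_left_mono) (auto simp: abs_dist_diff_le dist_commute)
    ultimately show ?thesis
      using False shell_weight_lipschitz[of m "dist s p" "dist s x"]
      by (simp add: copy_potential_def)
  qed
  moreover have "fresh_copies C' E'"
    using fresh by (auto simp: fresh_copies_def C'_def E'_def i_def)
  ultimately show ?thesis
    by (intro that[of C' E' "dist s p"]) (auto simp: C'_def E'_def i_def current_copy_def)
qed

lemma sum_copy_potential_step: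
  assumes "finite N" "p \<noteq> s" "m = shell_index p" "{m - 1, m, m + 1} \<subseteq> N"
    and "\<And>n. n \<noteq> m \<Longrightarrow> q' n = q n" "q' m = p"
    and "cost - copy_potential m (q m) x \<le> shell_slope * dist x p"
  shows "(\<Sum>n\<in>N. copy_potential n (q' n) p)
    \<le> (\<Sum>n\<in>N. copy_potential n (q n) x) + 3 * shell_slope * dist x p - cost"
proof -
  define d where "d = shell_slope * dist x p"
  define b where "b n = (if n = m then d - cost else 0) + (if n = m - 1 then d else 0)
    + (if n = m + 1 then d else 0)" for n
  have "copy_potential n (q' n) p \<le> copy_potential n (q n) x + b n" for n
  proof -
    consider "n = m" | "n \<in> {m - 1, m + 1}" | "n \<notin> {m - 1, m, m + 1}" by auto
    then show ?thesis
    proof cases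
      case 1
      then show ?thesis using assms(6,7) by (simp add: b_def d_def copy_potential_self)
    next
      case 2
      then show ?thesis
        using assms(5) copy_potential_lipschitz[of n "q n" p x] by (auto simp: b_def d_def)
    next
      case 3
      then show ?thesis
        using assms(2,3,5) copy_potential_vanishes[of p n] copy_potential_nonneg[of n "q n" x]
        by (auto simp: b_def)
    qed
  qed
  then have "(\<Sum>n\<in>N. copy_potential n (q' n) p) \<le> (\<Sum>n\<in>N. copy_potential n (q n) x + b n)"
    by (rule sum_mono)
  also have "\<dots> = (\<Sum>n\<in>N. copy_potential n (q n) x) + (3 * d - cost)"
    using assms(1,4) by (simp add: sum.distrib b_def)
  finally show ?thesis by (simp add: d_def)
qed

definition potential ::
    "int set \<Rightarrow> nat set \<Rightarrow> (nat \<Rightarrow> 'a) \<Rightarrow> (int \<Rightarrow> nat \<Rightarrow> 'a) \<Rightarrow> (int \<Rightarrow> nat \<Rightarrow> nat) \<Rightarrow> real" where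
  "potential N K c C E = (\<Sum>k\<in>K. \<Sum>n\<in>N. copy_potential n (current_copy C E n k) (c k))"

lemma simulation_step:
  assumes "fresh_copies C E" "p \<noteq> s" "k \<in> K" "finite K" "finite N"
    and "{shell_index p - 1, shell_index p, shell_index p + 1} \<subseteq> N"
  obtains C' E' where "fresh_copies C' E'"
    and "\<And>\<tau>. (\<Sum>n\<in>N. opt_from (C n) (shell_requests n (p # \<tau>))) + potential N K (c(k := p)) C' E'
      \<le> (\<Sum>n\<in>N. opt_from (C' n) (shell_requests n \<tau>)) + potential N K c C E
        + 3 * shell_slope * dist (c k) p"
proof -
  define m where "m = shell_index p"
  obtain C' E' cost where fresh': "fresh_copies C' E'"
    and C'_other: "\<And>n. n \<noteq> m \<Longrightarrow> C' n = C n"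
    and opt_m: "\<And>\<tau>. opt_from (C m) (p # \<tau>) \<le> cost + opt_from (C' m) \<tau>"
    and copy_m: "current_copy C' E' m k = p"
    and copy_other: "\<And>n k'. (n, k') \<noteq> (m, k) \<Longrightarrow> current_copy C' E' n k' = current_copy C E n k'"
    and cost: "cost - copy_potential m (current_copy C E m k) (c k) \<le> shell_slope * dist (c k) p"
    using shell_step[OF assms(1,2) m_def] by metis
  have mN: "m \<in> N" using assms(6) by (simp add: m_def)
  have opt: "(\<Sum>n\<in>N. opt_from (C n) (shell_requests n (p # \<tau>)))
      \<le> (\<Sum>n\<in>N. opt_from (C' n) (shell_requests n \<tau>)) + cost" for \<tau>
  proof -
    have "(\<Sum>n\<in>N - {m}. opt_from (C n) (shell_requests n (p # \<tau>)))
        = (\<Sum>n\<in>N - {m}. opt_from (C' n) (shell_requests n \<tau>))"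
      using C'_other by (intro sum.cong) (auto simp: shell_requests_Cons m_def)
    moreover have "opt_from (C m) (shell_requests m (p # \<tau>)) \<le> cost + opt_from (C' m) (shell_requests m \<tau>)"
      using opt_m assms(2) by (simp add: shell_requests_Cons m_def)
    ultimately show ?thesis
      using sum.remove[OF assms(5) mN, of "\<lambda>n. opt_from (C n) (shell_requests n (p # \<tau>))"]
        sum.remove[OF assms(5) mN, of "\<lambda>n. opt_from (C' n) (shell_requests n \<tau>)"]
      by linarith
  qed
  have pot: "potential N K (c(k := p)) C' E' \<le> potential N K c C E + 3 * shell_slope * dist (c k) p - cost"
  proof -
    define F where "F c C E k' = (\<Sum>n\<in>N. copy_potential n (current_copy C E n k') (c k'))"
      for c C E k'
    have "F (c(k := p)) C' E' k \<le> F c C E k + 3 * shell_slope * dist (c k) p - cost"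
      unfolding F_def fun_upd_same using assms(2,5) assms(6)[folded m_def] copy_m copy_other cost
      by (intro sum_copy_potential_step[OF _ _ m_def,
            where q' = "\<lambda>n. current_copy C' E' n k" and q = "\<lambda>n. current_copy C E n k"]) auto
    moreover have "(\<Sum>k'\<in>K - {k}. F (c(k := p)) C' E' k') = (\<Sum>k'\<in>K - {k}. F c C E k')"
      using copy_other by (intro sum.cong) (auto simp: F_def)
    ultimately show ?thesis
      using sum.remove[OF assms(4,3), of "F (c(k := p)) C' E'"] sum.remove[OF assms(4,3), of "F c C E"]
      by (simp add: potential_def F_def)
  qed
  show ?thesis
  proof (rule that[OF fresh'])
    show "(\<Sum>n\<in>N. opt_from (C n) (shell_requests n (p # \<tau>))) + potential N K (c(k := p)) C' E'
      \<le> (\<Sum>n\<in>N. opt_from (C' n) (shell_requests n \<tau>)) + potential N K c C E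
        + 3 * shell_slope * dist (c k) p" for \<tau>
      using opt[of \<tau>] pot by linarith
  qed
qed

lemma sum_opt_from_shell_requests_le:
  assumes "fresh_copies C E" "set (map snd steps) \<subseteq> K" "finite K" "finite N"
    and "\<forall>p\<in>set (map fst steps). p \<noteq> s \<longrightarrow> {shell_index p - 1, shell_index p, shell_index p + 1} \<subseteq> N"
  shows "(\<Sum>n\<in>N. opt_from (C n) (shell_requests n (map fst steps)))
    \<le> 3 * shell_slope * serve_cost c steps + potential N K c C E"
  using assms(1,2,5)
proof (induction steps arbitrary: c C E)
  case Nil
  then show ?case
    by (simp add: shell_requests_def opt_from_Nil potential_def sum_nonneg copy_potential_nonneg)
next
  case (Cons step steps)
  obtain p k where step: "step = (p, k)" by fastforce
  have k: "k \<in> K" using Cons.prems(2) by (simp add: step)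
  have cost: "serve_cost c (step # steps) = dist (c k) p + serve_cost (c(k := p)) steps"
    by (simp add: step)
  have slope: "0 \<le> 3 * shell_slope * dist (c k) p"
    using shell_slope_ge_1 by simp
  show ?case
  proof (cases "p = s")
    case True
    have "potential N K (c(k := p)) C E \<le> potential N K c C E"
      unfolding potential_def using True
      by (intro sum_mono) (auto simp: copy_potential_source copy_potential_nonneg)
    moreover have "(\<Sum>n\<in>N. opt_from (C n) (shell_requests n (map fst steps)))
        \<le> 3 * shell_slope * serve_cost (c(k := p)) steps + potential N K (c(k := p)) C E"
      using Cons.prems by (intro Cons.IH) (auto simp: step)
    ultimately show ?thesis
      using True slope by (simp add: step cost shell_requests_Cons algebra_simps)
  next
    case False
    have "{shell_index p - 1, shell_index p, shell_index p + 1} \<subseteq> N"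
      using Cons.prems(3) False by (simp add: step)
    then obtain C' E' where "fresh_copies C' E'"
      and bound: "\<And>\<tau>. (\<Sum>n\<in>N. opt_from (C n) (shell_requests n (p # \<tau>))) + potential N K (c(k := p)) C' E'
        \<le> (\<Sum>n\<in>N. opt_from (C' n) (shell_requests n \<tau>)) + potential N K c C E
          + 3 * shell_slope * dist (c k) p"
      using simulation_step[OF Cons.prems(1) False k assms(3,4)] by blast
    have "(\<Sum>n\<in>N. opt_from (C' n) (shell_requests n (map fst steps)))
        \<le> 3 * shell_slope * serve_cost (c(k := p)) steps + potential N K (c(k := p)) C' E'"
      using Cons.prems \<open>fresh_copies C' E'\<close> by (intro Cons.IH) (auto simp: step)
    then show ?thesis
      using bound[of "map fst steps"] by (simp add: step cost algebra_simps)
  qed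
qed

lemma sum_OPT_shell_requests_le:
  assumes "finite N"
    and "\<forall>p\<in>set \<sigma>. p \<noteq> s \<longrightarrow> {shell_index p - 1, shell_index p, shell_index p + 1} \<subseteq> N"
  shows "(\<Sum>n\<in>N. OPT s (shell_requests n \<sigma>)) \<le> 3 * shell_slope * OPT s \<sigma>"
proof -
  have "(\<Sum>n\<in>N. OPT s (shell_requests n \<sigma>)) / (3 * shell_slope) \<le> opt_from (\<lambda>_. s) \<sigma>"
  proof (rule opt_from_greatest)
    fix ks :: "nat list" assume "length ks = length \<sigma>"
    then have "(\<Sum>n\<in>N. opt_from (\<lambda>_. s) (shell_requests n \<sigma>))
        \<le> 3 * shell_slope * serve_cost (\<lambda>_. s) (zip \<sigma> ks) + potential N (set ks) (\<lambda>_. s) (\<lambda>_ _. s) (\<lambda>_ _. 0)"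
      using sum_opt_from_shell_requests_le[of "\<lambda>_ _. s" "\<lambda>_ _. 0" "zip \<sigma> ks" "set ks" N] assms
      by (simp add: fresh_copies_def)
    then show "(\<Sum>n\<in>N. OPT s (shell_requests n \<sigma>)) / (3 * shell_slope) \<le> serve_cost (\<lambda>_. s) (zip \<sigma> ks)"
      using shell_slope_ge_1
      by (simp add: OPT_eq_opt_from potential_def copy_potential_source divide_le_eq mult.commute)
  qed
  then show ?thesis
    using shell_slope_ge_1 by (simp add: OPT_eq_opt_from divide_le_eq mult.commute)
qed

section \<open>The combined online algorithm\<close>

(* Server to_nat (Some (n, k)) plays server k of the algorithm for shell n; requests at s are
   answered at no cost by the server to_nat None, which never leaves s. *)
definition combined_alg :: "(int \<Rightarrow> 'a online_alg) \<Rightarrow> 'a online_alg" where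
  "combined_alg A \<tau> = (let p = last \<tau>; n = shell_index p in
     if p = s then to_nat (None :: (int \<times> nat) option)
     else to_nat (Some (n, A n (shell_requests n \<tau>))))"

lemma combined_alg_snoc:
  "combined_alg A (\<sigma> @ [p]) = (if p = s then to_nat (None :: (int \<times> nat) option)
     else to_nat (Some (shell_index p, A (shell_index p) (shell_requests (shell_index p) (\<sigma> @ [p])))))"
  by (simp add: combined_alg_def Let_def)

lemma alg_config_combined_alg:
  "alg_config s (combined_alg A) \<sigma> (to_nat (Some (n, k))) = alg_config s (A n) (shell_requests n \<sigma>) k
   \<and> alg_config s (combined_alg A) \<sigma> (to_nat (None :: (int \<times> nat) option)) = s"
proof (induction \<sigma> arbitrary: n k rule: rev_induct)
  case Nil
  then show ?case by (simp add: alg_config_Nil shell_requests_def)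
next
  case (snoc p \<sigma>)
  show ?case
  proof (cases "p = s")
    case True
    then show ?thesis
      using snoc.IH by (simp add: alg_config_snoc combined_alg_snoc shell_requests_snoc)
  next
    case False
    then show ?thesis
      using snoc.IH by (auto simp: alg_config_snoc combined_alg_snoc shell_requests_snoc Let_def)
  qed
qed

lemma ALG_cost_combined_alg:
  assumes "finite N" "\<forall>p\<in>set \<sigma>. p \<noteq> s \<longrightarrow> shell_index p \<in> N"
  shows "ALG_cost s (combined_alg A) \<sigma> = (\<Sum>n\<in>N. ALG_cost s (A n) (shell_requests n \<sigma>))"
  using assms(2)
proof (induction \<sigma> rule: rev_induct)
  case Nil
  then show ?case by (simp add: ALG_cost_Nil shell_requests_def)
next
  case (snoc p \<sigma>)
  show ?case
  proof (cases "p = s")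
    case True
    then show ?thesis
      using snoc alg_config_combined_alg
      by (simp add: ALG_cost_snoc combined_alg_snoc shell_requests_snoc)
  next
    case False
    define m where "m = shell_index p"
    have m: "m \<in> N" using snoc.prems False by (simp add: m_def)
    have "ALG_cost s (combined_alg A) (\<sigma> @ [p])
        = (\<Sum>n\<in>N. ALG_cost s (A n) (shell_requests n \<sigma>))
          + dist (alg_config s (A m) (shell_requests m \<sigma>) (A m (shell_requests m \<sigma> @ [p]))) p"
      using snoc False alg_config_combined_alg
      by (simp add: ALG_cost_snoc combined_alg_snoc shell_requests_snoc Let_def m_def)
    also have "\<dots> = (\<Sum>n\<in>N. ALG_cost s (A n) (shell_requests n (\<sigma> @ [p])))"
      using sum.remove[OF assms(1) m, of "\<lambda>n. ALG_cost s (A n) (shell_requests n \<sigma>)"]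
        sum.remove[OF assms(1) m, of "\<lambda>n. ALG_cost s (A n) (shell_requests n (\<sigma> @ [p]))"]
      by (simp add: False m_def shell_requests_snoc ALG_cost_snoc)
    finally show ?thesis .
  qed
qed

lemma combined_alg_competitive:
  assumes "\<And>n. strictly_competitive (shell M s r n) s \<rho> (A n)" and "3 * shell_slope \<le> c"
  shows "strictly_competitive M s (c * \<rho>) (combined_alg A)"
  unfolding strictly_competitive_def
proof (intro allI impI)
  fix \<sigma> assume "set \<sigma> \<subseteq> M"
  define N where "N = (\<Union>p\<in>set \<sigma> - {s}. {shell_index p - 1, shell_index p, shell_index p + 1})"
  have N: "finite N" "\<forall>p\<in>set \<sigma>. p \<noteq> s \<longrightarrow> {shell_index p - 1, shell_index p, shell_index p + 1} \<subseteq> N"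
    by (auto simp: N_def)
  define X where "X = (\<Sum>n\<in>N. OPT s (shell_requests n \<sigma>))"
  have "ALG_cost s (combined_alg A) \<sigma> = (\<Sum>n\<in>N. ALG_cost s (A n) (shell_requests n \<sigma>))"
    using N by (intro ALG_cost_combined_alg) auto
  also have "\<dots> \<le> (\<Sum>n\<in>N. \<rho> * OPT s (shell_requests n \<sigma>))"
    using assms(1) set_shell_requests_subset_shell[OF \<open>set \<sigma> \<subseteq> M\<close>]
    by (intro sum_mono) (auto simp: strictly_competitive_def)
  finally have ALG: "ALG_cost s (combined_alg A) \<sigma> \<le> \<rho> * X"
    by (simp add: X_def sum_distrib_left)
  have "0 \<le> X" unfolding X_def OPT_eq_opt_from by (intro sum_nonneg opt_from_nonneg)
  have "X \<le> 3 * shell_slope * OPT s \<sigma>"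
    unfolding X_def using N by (rule sum_OPT_shell_requests_le)
  have OPT: "0 \<le> OPT s \<sigma>" "OPT s \<sigma> \<le> ALG_cost s (combined_alg A) \<sigma>"
    unfolding OPT_eq_opt_from by (rule opt_from_nonneg) (rule OPT_le_ALG_cost[unfolded OPT_eq_opt_from])
  show "ALG_cost s (combined_alg A) \<sigma> \<le> c * \<rho> * OPT s \<sigma>"
  proof (cases "0 \<le> \<rho>")
    case True
    have "3 * shell_slope * OPT s \<sigma> \<le> c * OPT s \<sigma>"
      using assms(2) OPT(1) by (rule mult_right_mono)
    then have "\<rho> * X \<le> \<rho> * (c * OPT s \<sigma>)"
      using True \<open>X \<le> 3 * shell_slope * OPT s \<sigma>\<close> by (intro mult_left_mono) auto
    then show ?thesis using ALG by (simp add: mult_ac)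
  next
    case False
    (* ALG is squeezed between OPT \<ge> 0 and \<rho> X \<le> 0, so OPT vanishes. *)
    then have "\<rho> * X \<le> 0" using \<open>0 \<le> X\<close> by (simp add: mult_nonpos_nonneg)
    then have "OPT s \<sigma> = 0" and "ALG_cost s (combined_alg A) \<sigma> \<le> 0"
      using ALG OPT by linarith+
    then show ?thesis by simp
  qed
qed

end

theorem theorem10:
  fixes M :: "'a::metric_space set" and s :: 'a and r \<rho> :: real
  assumes "s \<in> M" and "r > 1"
    and "\<forall>n::int. \<exists>A. strictly_competitive (shell M s r n) s \<rho> A"
  shows "\<exists>A. strictly_competitive M s ((4 * r - 1) / (r - 1) * \<rho>) A"
proof -
  interpret shell_decomposition s r
    using \<open>r > 1\<close> by unfold_locales
  obtain A where A: "\<forall>n. strictly_competitive (shell M s r n) s \<rho> (A n)"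
    using choice[OF assms(3)] by blast
  have "3 * shell_slope = 3 * r / (r - 1)"
    by (simp add: shell_slope_def)
  also have "\<dots> \<le> (4 * r - 1) / (r - 1)"
    using \<open>r > 1\<close> by (intro divide_right_mono) auto
  finally show ?thesis
    using combined_alg_competitive[of M \<rho> A] A by blast
qed

end
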